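(* For any ring $R$ (associative with identity), the matrix rings $M_2(R)$ and $M_3(R)$ are 2-clean.
   Context: A ring $S$ is 2-clean if every element of $S$ can be written as $e+u_1+u_2$ with $e=e^2\in S$ and $u_1,u_2$ units of $S$. *)

theory Defs
  imports "HOL-Analysis.Analysis"
begin

text \<open>The ring of n x n matrices over a ring R (type class ring_1: associative,
  with identity, not necessarily commutative) is modelled as the type 'a^'n^'n with
  matrix addition (+), matrix product (**), identity mat 1.
  Units of the matrix ring are the two-sided invertible matrices (library notion invertible).\<close>

definition matrix_ring_2clean :: "'a::ring_1 itself \<Rightarrow> 'n::finite itself \<Rightarrow> bool" where
  "matrix_ring_2clean _ _ \<longleftrightarrow>
     (\<forall>A :: 'a^'n^'n. \<exists>E U1 U2 :: 'a^'n^'n.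
        E ** E = E \<and> invertible U1 \<and> invertible U2 \<and> A = E + U1 + U2)"

end

theory Submission
  imports Defs
begin

text \<open>Take E = e(1,1) + z e(1,n), idempotent for every z, and let a lower unitriangular
  matrix absorb whatever is left strictly below the diagonal. The rest of A is covered
  by U = S C T with S, T upper unitriangular and C the cyclic permutation matrix: U has
  ones on the subdiagonal, and its entries on and above the diagonal can be prescribed
  freely by solving triangularly for the entries of S and T, except for the corner entry
  U(1,n), whose discrepancy is absorbed by the free parameter z of E.\<close>

definition mat2 :: "'a::ring_1 \<Rightarrow> 'a \<Rightarrow> 'a \<Rightarrow> 'a \<Rightarrow> 'a^2^2" where
  "mat2 a b c d = vector [vector [a, b], vector [c, d]]"

lemma mat2_nth [simp]:
  "mat2 a b c d $ 1 $ 1 = a" "mat2 a b c d $ 1 $ 2 = b"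
  "mat2 a b c d $ 2 $ 1 = c" "mat2 a b c d $ 2 $ 2 = d"
  by (simp_all add: mat2_def)

lemma mat2_eq_iff:
  "mat2 a b c d = mat2 a' b' c' d' \<longleftrightarrow> a = a' \<and> b = b' \<and> c = c' \<and> d = d'"
  by (auto simp: vec_eq_iff forall_2)

lemma mat2_entries: "(A :: 'a::ring_1^2^2) = mat2 (A$1$1) (A$1$2) (A$2$1) (A$2$2)"
  by (simp add: vec_eq_iff forall_2)

lemma mat2_add:
  "mat2 a b c d + mat2 a' b' c' d' = mat2 (a + a') (b + b') (c + c') (d + d')"
  by (simp add: vec_eq_iff forall_2)

lemma mat2_mult:
  "mat2 a b c d ** mat2 a' b' c' d' =
   mat2 (a*a' + b*c') (a*b' + b*d') (c*a' + d*c') (c*b' + d*d')"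
  by (simp add: matrix_matrix_mult_def vec_eq_iff forall_2 sum_2)

lemma mat2_one: "(mat 1 :: 'a::ring_1^2^2) = mat2 1 0 0 1"
  by (simp add: vec_eq_iff forall_2 mat_def)

lemma invertible_mat2_upper_unitriangular: "invertible (mat2 1 p 0 (1::'a::ring_1))"
  unfolding invertible_def
  by (rule exI[of _ "mat2 1 (-p) 0 1"]) (simp add: mat2_mult mat2_one mat2_eq_iff)

lemma invertible_mat2_lower_unitriangular: "invertible (mat2 1 0 l (1::'a::ring_1))"
  unfolding invertible_def
  by (rule exI[of _ "mat2 1 0 (-l) 1"]) (simp add: mat2_mult mat2_one mat2_eq_iff)

lemma invertible_mat2_swap: "invertible (mat2 0 1 1 (0::'a::ring_1))"
  unfolding invertible_def
  by (rule exI[of _ "mat2 0 1 1 0"]) (simp add: mat2_mult mat2_one mat2_eq_iff)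

lemma mat2_subdiagonal_one_factor:
  "mat2 p (1 + p*w) 1 w = mat2 1 p 0 1 ** mat2 0 1 1 0 ** mat2 1 w 0 (1::'a::ring_1)"
  by (simp add: mat2_mult mat2_eq_iff algebra_simps)

lemma invertible_mat2_subdiagonal_one: "invertible (mat2 p (1 + p*w) 1 (w::'a::ring_1))"
  unfolding mat2_subdiagonal_one_factor
  by (intro invertible_mult invertible_mat2_upper_unitriangular invertible_mat2_swap)

lemma matrix_ring_2clean_2: "matrix_ring_2clean TYPE('a::ring_1) TYPE(2)"
  unfolding matrix_ring_2clean_def
proof
  fix A :: "'a^2^2"
  define p where "p = A$1$1 - 2"
  define w where "w = A$2$2 - 1"
  define E where "E = mat2 1 (A$1$2 - 1 - p*w) 0 0"
  define U1 where "U1 = mat2 p (1 + p*w) 1 w"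
  define U2 where "U2 = mat2 1 0 (A$2$1 - 1) 1"
  have "E ** E = E"
    by (simp add: E_def mat2_mult)
  moreover have "invertible U1" "invertible U2"
    unfolding U1_def U2_def
    by (rule invertible_mat2_subdiagonal_one invertible_mat2_lower_unitriangular)+
  moreover have "A = E + U1 + U2"
    by (subst mat2_entries[of A])
      (simp add: E_def U1_def U2_def p_def w_def mat2_add mat2_eq_iff algebra_simps)
  ultimately show "\<exists>E U1 U2 :: 'a^2^2. E ** E = E \<and> invertible U1 \<and> invertible U2 \<and> A = E + U1 + U2"
    by blast
qed

definition mat3 :: "'a::ring_1 \<Rightarrow> 'a \<Rightarrow> 'a \<Rightarrow> 'a \<Rightarrow> 'a \<Rightarrow> 'a \<Rightarrow> 'a \<Rightarrow> 'a \<Rightarrow> 'a \<Rightarrow> 'a^3^3"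
  where "mat3 a b c d e f g h i = vector [vector [a, b, c], vector [d, e, f], vector [g, h, i]]"

lemma mat3_nth [simp]:
  "mat3 a b c d e f g h i $ 1 $ 1 = a" "mat3 a b c d e f g h i $ 1 $ 2 = b"
  "mat3 a b c d e f g h i $ 1 $ 3 = c" "mat3 a b c d e f g h i $ 2 $ 1 = d"
  "mat3 a b c d e f g h i $ 2 $ 2 = e" "mat3 a b c d e f g h i $ 2 $ 3 = f"
  "mat3 a b c d e f g h i $ 3 $ 1 = g" "mat3 a b c d e f g h i $ 3 $ 2 = h"
  "mat3 a b c d e f g h i $ 3 $ 3 = i"
  by (simp_all add: mat3_def)

lemma mat3_eq_iff:
  "mat3 a b c d e f g h i = mat3 a' b' c' d' e' f' g' h' i' \<longleftrightarrow>
   a = a' \<and> b = b' \<and> c = c' \<and> d = d' \<and> e = e' \<and> f = f' \<and> g = g' \<and> h = h' \<and> i = i'"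
  by (auto simp: vec_eq_iff forall_3)

lemma mat3_entries:
  "(A :: 'a::ring_1^3^3) =
   mat3 (A$1$1) (A$1$2) (A$1$3) (A$2$1) (A$2$2) (A$2$3) (A$3$1) (A$3$2) (A$3$3)"
  by (simp add: vec_eq_iff forall_3)

lemma mat3_add:
  "mat3 a b c d e f g h i + mat3 a' b' c' d' e' f' g' h' i' =
   mat3 (a + a') (b + b') (c + c') (d + d') (e + e') (f + f') (g + g') (h + h') (i + i')"
  by (simp add: vec_eq_iff forall_3)

lemma mat3_mult:
  "mat3 a b c d e f g h i ** mat3 a' b' c' d' e' f' g' h' i' =
   mat3 (a*a' + b*d' + c*g') (a*b' + b*e' + c*h') (a*c' + b*f' + c*i')
        (d*a' + e*d' + f*g') (d*b' + e*e' + f*h') (d*c' + e*f' + f*i')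
        (g*a' + h*d' + i*g') (g*b' + h*e' + i*h') (g*c' + h*f' + i*i')"
  by (simp add: matrix_matrix_mult_def vec_eq_iff forall_3 sum_3)

lemma mat3_one: "(mat 1 :: 'a::ring_1^3^3) = mat3 1 0 0 0 1 0 0 0 1"
  by (simp add: vec_eq_iff forall_3 mat_def)

lemma invertible_mat3_upper_unitriangular: "invertible (mat3 1 p q 0 1 r 0 0 (1::'a::ring_1))"
  unfolding invertible_def
  by (rule exI[of _ "mat3 1 (-p) (p*r - q) 0 1 (-r) 0 0 1"])
    (simp add: mat3_mult mat3_one mat3_eq_iff algebra_simps)

lemma invertible_mat3_lower_unitriangular: "invertible (mat3 1 0 0 l 1 0 m n (1::'a::ring_1))"
  unfolding invertible_def
  by (rule exI[of _ "mat3 1 0 0 (-l) 1 0 (n*l - m) (-n) 1"])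
    (simp add: mat3_mult mat3_one mat3_eq_iff algebra_simps)

lemma invertible_mat3_cycle: "invertible (mat3 0 0 1 1 0 0 0 1 (0::'a::ring_1))"
  unfolding invertible_def
  by (rule exI[of _ "mat3 0 1 0 0 0 1 1 0 0"]) (simp add: mat3_mult mat3_one mat3_eq_iff)

lemma mat3_subdiagonal_one_factor:
  "mat3 p q (1 + p*t + q*w) 1 r (t + r*w) 0 1 w =
   mat3 1 p q 0 1 r 0 0 1 ** mat3 0 0 1 1 0 0 0 1 0 ** mat3 1 0 t 0 1 w 0 0 (1::'a::ring_1)"
  by (simp add: mat3_mult mat3_eq_iff algebra_simps)

lemma invertible_mat3_subdiagonal_one:
  "invertible (mat3 p q (1 + p*t + q*w) 1 r (t + r*w) 0 1 (w::'a::ring_1))"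
  unfolding mat3_subdiagonal_one_factor
  by (intro invertible_mult invertible_mat3_upper_unitriangular invertible_mat3_cycle)

lemma matrix_ring_2clean_3: "matrix_ring_2clean TYPE('a::ring_1) TYPE(3)"
  unfolding matrix_ring_2clean_def
proof
  fix A :: "'a^3^3"
  define p where "p = A$1$1 - 2"
  define q where "q = A$1$2"
  define r where "r = A$2$2 - 1"
  define w where "w = A$3$3 - 1"
  define t where "t = A$2$3 - r*w"
  define E where "E = mat3 1 0 (A$1$3 - 1 - p*t - q*w) 0 0 0 0 0 0"
  define U1 where "U1 = mat3 p q (1 + p*t + q*w) 1 r (t + r*w) 0 1 w"
  define U2 where "U2 = mat3 1 0 0 (A$2$1 - 1) 1 0 (A$3$1) (A$3$2 - 1) 1"
  have "E ** E = E"
    by (simp add: E_def mat3_mult)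
  moreover have "invertible U1" "invertible U2"
    unfolding U1_def U2_def
    by (rule invertible_mat3_subdiagonal_one invertible_mat3_lower_unitriangular)+
  moreover have "A = E + U1 + U2"
    by (subst mat3_entries[of A])
      (simp add: E_def U1_def U2_def p_def q_def r_def w_def t_def mat3_add mat3_eq_iff
        algebra_simps)
  ultimately show "\<exists>E U1 U2 :: 'a^3^3. E ** E = E \<and> invertible U1 \<and> invertible U2 \<and> A = E + U1 + U2"
    by blast
qed

theorem lemma3:
  shows "matrix_ring_2clean TYPE('a::ring_1) TYPE(2) \<and> matrix_ring_2clean TYPE('a) TYPE(3)"
  using matrix_ring_2clean_2 matrix_ring_2clean_3 by blast

end
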